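(* Let $f:[0,1]\times\mathbb{R}\to\mathbb{R}$ be continuous with continuous partial derivative $f_x$ with respect to the second variable, suppose there exist positive constants $A,B$ with $A<1$ such that $|f(t,x)|\leqslant A|x|+B$ for all $t\in[0,1]$, $x\in\mathbb{R}$, suppose $\inf_{[0,1]\times\mathbb{R}}f_x>-1$, and let $v:[0,1]\to\mathbb{R}$ be continuous. For $N\in\mathbb{N}$, $N\geqslant2$, let $x_N:\{0,\dots,N\}\to\mathbb{R}$ be the unique solution of $$\Delta^2x(k-1)=\tfrac{1}{N^2}f\left(\tfrac kN,x(k)\right)+\tfrac{1}{N^2}v\left(\tfrac kN\right),\ k=1,\dots,N-1,\qquad x(0)=x(N)=0.$$ Then there exists a constant $M>0$ such that $|x_N(k)|\leqslant M$ for every $N\geqslant2$ and every $k\in\{0,\dots,N\}$.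
   Context: $\Delta x(k-1)=x(k)-x(k-1)$, $\Delta^2x(k-1)=x(k+1)-2x(k)+x(k-1)$. *)

theory Defs
  imports "HOL-Analysis.Analysis"
begin

end

theory Submission
  imports Defs "HOL-Analysis.Analysis"
begin

text \<open>
  A parabola \<open>\<phi>(j) = D j (N - j) / (2N\<^sup>2)\<close> has second difference \<open>-D/N\<^sup>2\<close>, vanishes at
  \<open>0\<close> and \<open>N\<close>, and is bounded by \<open>D/8\<close>. If \<open>|\<Delta>\<^sup>2x| \<le> D/N\<^sup>2\<close>, then \<open>\<phi> \<plusminus> x\<close> are discretely
  concave with zero boundary values, hence nonnegative, so \<open>|x| \<le> D/8\<close>.
  For a solution of the boundary value problem the growth condition gives
  \<open>D = A max|x| + B + max|v|\<close>, and \<open>max|x| \<le> D/8\<close> can be solved for \<open>max|x|\<close> because \<open>A < 8\<close>.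
\<close>

definition second_diff :: "(nat \<Rightarrow> real) \<Rightarrow> nat \<Rightarrow> real" where
  "second_diff u k = u (k + 1) - 2 * u k + u (k - 1)"

lemma second_diff_nonpos_imp_diff_antimono:
  assumes concave: "\<And>k. 1 \<le> k \<Longrightarrow> k < N \<Longrightarrow> second_diff u k \<le> 0"
    and "i \<le> j" "j < N"
  shows "u (Suc j) - u j \<le> u (Suc i) - u i"
  using assms(2,3)
proof (induction j rule: dec_induct)
  case base
  then show ?case by simp
next
  case (step j)
  have "second_diff u (Suc j) \<le> 0"
    using concave step.prems by simp
  then have "u (Suc (Suc j)) - u (Suc j) \<le> u (Suc j) - u j"
    by (simp add: second_diff_def)
  with step show ?case by simp
qed

lemma discrete_concave_nonneg:
  assumes concave: "\<And>k. 1 \<le> k \<Longrightarrow> k < N \<Longrightarrow> second_diff u k \<le> 0"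
    and u0: "u 0 = 0" and uN: "u N = 0" and kN: "k \<le> N"
  shows "0 \<le> u k"
proof (cases "k = 0")
  case True
  then show ?thesis using u0 by simp
next
  case False
  define d where "d = u k - u (k - 1)"
  note antimono = second_diff_nonpos_imp_diff_antimono[OF concave]
  have left: "real j * d \<le> u j" if "j \<le> k" for j
    using that
  proof (induction j)
    case 0
    then show ?case using u0 by simp
  next
    case (Suc j)
    have "d \<le> u (Suc j) - u j"
      using antimono[where i = j and j = "k - 1"] Suc.prems kN False by (simp add: d_def)
    with Suc show ?case by (simp add: algebra_simps)
  qed
  have right: "u j - u k \<le> real (j - k) * d" if "k \<le> j" "j \<le> N" for j
    using that
  proof (induction j rule: dec_induct)
    case base
    then show ?case by simp
  next
    case (step j)
    have "u (Suc j) - u j \<le> d"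
      using antimono[where i = "k - 1" and j = j] step False by (simp add: d_def)
    moreover have "real (Suc j - k) = real (j - k) + 1"
      using step by simp
    ultimately show ?case using step by (simp add: algebra_simps)
  qed
  text \<open>Eliminating the slope \<open>d\<close> between the two chord estimates.\<close>
  have "real (N - k) * (real k * d) \<le> real (N - k) * u k"
    using left[of k] by (intro mult_left_mono) simp_all
  moreover have "real k * (- u k) \<le> real k * (real (N - k) * d)"
    using right[of N] kN uN by (intro mult_left_mono) simp_all
  ultimately have "0 \<le> real N * u k"
    using kN by (simp add: of_nat_diff algebra_simps)
  moreover have "0 < real N"
    using False kN by simp
  ultimately show ?thesis by (simp add: zero_le_mult_iff)
qed

lemma second_diff_parabola:
  assumes "1 \<le> k"
  shows "second_diff (\<lambda>j. c * (real j * (real N - real j))) k = - 2 * c"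
proof -
  have "real (k - 1) = real k - 1"
    using assms by simp
  then show ?thesis
    by (simp add: second_diff_def algebra_simps)
qed

lemma abs_le_if_second_diff_bounded:
  assumes bound: "\<And>k. 1 \<le> k \<Longrightarrow> k < N \<Longrightarrow> \<bar>second_diff x k\<bar> \<le> D / real N ^ 2"
    and D: "0 \<le> D" and N: "0 < N"
    and x0: "x 0 = 0" and xN: "x N = 0" and kN: "k \<le> N"
  shows "\<bar>x k\<bar> \<le> D / 8"
proof -
  define c where "c = D / (2 * real N ^ 2)"
  define \<phi> where "\<phi> j = c * (real j * (real N - real j))" for j
  have \<phi>_second_diff: "second_diff \<phi> j = - D / real N ^ 2" if "1 \<le> j" for j
    using second_diff_parabola[OF that, of c N] N
    by (simp add: \<phi>_def[abs_def] c_def)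
  have \<phi>_le: "\<phi> k \<le> D / 8"
  proof -
    have "4 * (real k * (real N - real k)) \<le> real N ^ 2"
      using sum_squares_ge_zero[of "real N - 2 * real k" 0]
      by (simp add: power2_eq_square algebra_simps)
    then have "D * (4 * (real k * (real N - real k))) \<le> D * real N ^ 2"
      using D by (rule mult_left_mono)
    then show ?thesis
      using N by (simp add: \<phi>_def c_def field_simps)
  qed
  have "0 \<le> x k + \<phi> k"
  proof (rule discrete_concave_nonneg[where u = "\<lambda>j. x j + \<phi> j" and N = N])
    fix j assume "1 \<le> j" "j < N"
    then show "second_diff (\<lambda>j. x j + \<phi> j) j \<le> 0"
      using bound[of j] \<phi>_second_diff[of j] by (simp add: second_diff_def)
  qed (use x0 xN kN in \<open>simp_all add: \<phi>_def\<close>)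
  moreover have "0 \<le> - x k + \<phi> k"
  proof (rule discrete_concave_nonneg[where u = "\<lambda>j. - x j + \<phi> j" and N = N])
    fix j assume "1 \<le> j" "j < N"
    then show "second_diff (\<lambda>j. - x j + \<phi> j) j \<le> 0"
      using bound[of j] \<phi>_second_diff[of j] by (simp add: second_diff_def)
  qed (use x0 xN kN in \<open>simp_all add: \<phi>_def\<close>)
  ultimately show ?thesis
    using \<phi>_le by simp
qed

lemma abs_le_if_second_diff_sublinear:
  assumes bound: "\<And>k. 1 \<le> k \<Longrightarrow> k < N \<Longrightarrow> \<bar>second_diff x k\<bar> \<le> (A * \<bar>x k\<bar> + C) / real N ^ 2"
    and A: "0 \<le> A" "A < 8" and C: "0 \<le> C" and N: "0 < N"
    and x0: "x 0 = 0" and xN: "x N = 0" and kN: "k \<le> N"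
  shows "\<bar>x k\<bar> \<le> C / (8 - A)"
proof -
  define m where "m = Max ((\<lambda>j. \<bar>x j\<bar>) ` {0..N})"
  have le_m: "\<bar>x j\<bar> \<le> m" if "j \<le> N" for j
    unfolding m_def using that by (intro Max_ge) auto
  have "m \<in> (\<lambda>j. \<bar>x j\<bar>) ` {0..N}"
    unfolding m_def by (intro Max_in) auto
  then obtain j0 where "j0 \<le> N" "m = \<bar>x j0\<bar>"
    by auto
  moreover have "\<bar>x j\<bar> \<le> (A * m + C) / 8" if "j \<le> N" for j
  proof (rule abs_le_if_second_diff_bounded[OF _ _ N x0 xN that])
    fix i assume "1 \<le> i" "i < N"
    then have "\<bar>second_diff x i\<bar> \<le> (A * \<bar>x i\<bar> + C) / real N ^ 2"
      by (rule bound)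
    also have "\<dots> \<le> (A * m + C) / real N ^ 2"
      using le_m[of i] \<open>i < N\<close> A by (simp add: divide_right_mono mult_left_mono)
    finally show "\<bar>second_diff x i\<bar> \<le> (A * m + C) / real N ^ 2" .
  qed (use A C le_m[of 0] in simp)
  ultimately have "(8 - A) * m \<le> C"
    by (simp add: algebra_simps)
  then have "m \<le> C / (8 - A)"
    using A by (simp add: field_simps)
  then show ?thesis
    using le_m[OF kN] by simp
qed

theorem lemma12:
  fixes f fx :: "real \<Rightarrow> real \<Rightarrow> real" and v :: "real \<Rightarrow> real" and A B :: real
  assumes f_cont: "continuous_on ({0..1} \<times> UNIV) (\<lambda>(t, x). f t x)"
    and f_deriv: "\<And>t x. t \<in> {0..1} \<Longrightarrow> ((\<lambda>y. f t y) has_real_derivative fx t x) (at x)"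
    and fx_cont: "continuous_on ({0..1} \<times> UNIV) (\<lambda>(t, x). fx t x)"
    and A_pos: "0 < A" and A_lt1: "A < 1" and B_pos: "0 < B"
    and growth: "\<And>t x. t \<in> {0..1} \<Longrightarrow> \<bar>f t x\<bar> \<le> A * \<bar>x\<bar> + B"
    and fx_inf: "\<exists>c > -1. \<forall>t\<in>{0..1}. \<forall>x. c \<le> fx t x"
    and v_cont: "continuous_on {0..1} v"
  shows "\<exists>M > 0. \<forall>N::nat. \<forall>x::nat \<Rightarrow> real. N \<ge> 2 \<longrightarrow>
           (\<forall>k\<in>{1..N-1}. x (k+1) - 2 * x k + x (k-1)
               = 1 / real N ^ 2 * f (real k / real N) (x k) + 1 / real N ^ 2 * v (real k / real N))
           \<longrightarrow> x 0 = 0 \<longrightarrow> x N = 0 \<longrightarrow> (\<forall>k\<in>{0..N}. \<bar>x k\<bar> \<le> M)"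
proof -
  obtain V where V: "0 \<le> V" "\<And>t. t \<in> {0..1} \<Longrightarrow> \<bar>v t\<bar> \<le> V"
    using continuous_on_compact_bound[OF compact_Icc v_cont] by auto
  have "\<bar>x k\<bar> \<le> (B + V) / (8 - A)"
    if N: "2 \<le> N" and k: "k \<le> N" and x0: "x 0 = 0" and xN: "x N = 0"
      and eq: "\<forall>k\<in>{1..N-1}. x (k+1) - 2 * x k + x (k-1)
               = 1 / real N ^ 2 * f (real k / real N) (x k) + 1 / real N ^ 2 * v (real k / real N)"
    for N k and x :: "nat \<Rightarrow> real"
  proof (rule abs_le_if_second_diff_sublinear[OF _ _ _ _ _ x0 xN k])
    fix i assume i: "1 \<le> i" "i < N"
    then have t: "real i / real N \<in> {0..1}"
      by simp
    have "second_diff x i = (f (real i / real N) (x i) + v (real i / real N)) / real N ^ 2"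
      using eq i by (simp add: second_diff_def field_simps)
    moreover have "\<bar>f (real i / real N) (x i) + v (real i / real N)\<bar> \<le> A * \<bar>x i\<bar> + (B + V)"
      using growth[OF t, of "x i"] V(2)[OF t] by linarith
    ultimately show "\<bar>second_diff x i\<bar> \<le> (A * \<bar>x i\<bar> + (B + V)) / real N ^ 2"
      by (simp add: abs_divide divide_right_mono)
  qed (use N A_pos A_lt1 V(1) B_pos in auto)
  moreover have "0 < (B + V) / (8 - A)"
    using A_lt1 B_pos V(1) by simp
  ultimately show ?thesis
    by (intro exI[of _ "(B + V) / (8 - A)"]) auto
qed

end
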